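(* Let $k$ be a positive integer and let $n>\frac{k(k-1)}{2}$. Among the partitions counted by $D_k(n)$, those with an even number of parts exceeding the smallest part are equinumerous with those having an odd number of such parts, i.e. $D_k^e(n)=D_k^o(n)$. Consequently, $D_k(n)$ is even.
   Context: $D_k(n)$ is the number of partitions of $n$ into non-negative parts (the part $0$ is allowed) in which the smallest part appears exactly $k$ times and no other part is repeated. $D_k^e(n)$ (resp. $D_k^o(n)$) is the number of such partitions in which the number of parts greater than the smallest part is even (resp. odd). *)

theory Defs
  imports Main "HOL-Library.Multiset"
begin

text \<open>A partition of n into non-negative parts (0 allowed) is a finite multiset of
naturals with sum n.\<close>

definition D_set :: "nat \<Rightarrow> nat \<Rightarrow> nat multiset set" where
  "D_set k n = {M. M \<noteq> {#} \<and> sum_mset M = n \<and>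
      count M (Min_mset M) = k \<and>
      (\<forall>x \<in># M. x \<noteq> Min_mset M \<longrightarrow> count M x = 1)}"

definition big_parts :: "nat multiset \<Rightarrow> nat" where
  "big_parts M = size (filter_mset (\<lambda>x. x > Min_mset M) M)"

definition D :: "nat \<Rightarrow> nat \<Rightarrow> nat" where
  "D k n = card (D_set k n)"

definition De :: "nat \<Rightarrow> nat \<Rightarrow> nat" where
  "De k n = card {M \<in> D_set k n. even (big_parts M)}"

definition Do :: "nat \<Rightarrow> nat \<Rightarrow> nat" where
  "Do k n = card {M \<in> D_set k n. odd (big_parts M)}"

end

theory Submission
  imports Defs "HOL-Computational_Algebra.Polynomial"
begin

text \<open>Record a partition counted by D k n by its smallest part m and the set T of its larger
parts.  Then the signed count De k n - Do k n is the coefficient of q^n in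
F_k(N) = \<Sum>_{m \<le> N} q^(k m) \<Prod>_{m < j \<le> N} (1 - q^j), for any N \<ge> n.  These polynomials
satisfy F_1 = 1 and F_(k+1) = (1 - q^k) F_k + q^(k (N+1)), so the coefficient of q^n in F_(k+1)
is that of q^n in F_k minus that of q^(n-k) in F_k, and induction on k shows that it vanishes
as soon as k (k - 1) < 2 n \<le> 2 N.\<close>

definition tail_prod :: "'a::comm_ring_1 \<Rightarrow> nat \<Rightarrow> nat \<Rightarrow> 'a" where
  "tail_prod x m N = (\<Prod>j\<in>{m<..N}. 1 - x ^ j)"

definition signed_gf :: "'a::comm_ring_1 \<Rightarrow> nat \<Rightarrow> nat \<Rightarrow> 'a" where
  "signed_gf x k N = (\<Sum>m\<le>N. x ^ (k * m) * tail_prod x m N)"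

lemma tail_prod_self [simp]: "tail_prod x N N = 1"
  by (simp add: tail_prod_def)

lemma tail_prod_Suc:
  assumes "m \<le> N"
  shows "tail_prod x m (Suc N) = (1 - x ^ Suc N) * tail_prod x m N"
proof -
  from assms have "{m<..Suc N} = insert (Suc N) {m<..N}" by auto
  then show ?thesis by (simp add: tail_prod_def)
qed

lemma signed_gf_Suc_truncation:
  "signed_gf x k (Suc N) = (1 - x ^ Suc N) * signed_gf x k N + x ^ (k * Suc N)"
proof -
  have "signed_gf x k (Suc N) = (\<Sum>m\<le>N. x ^ (k * m) * tail_prod x m (Suc N)) + x ^ (k * Suc N)"
    by (simp add: signed_gf_def)
  also have "(\<Sum>m\<le>N. x ^ (k * m) * tail_prod x m (Suc N)) = (1 - x ^ Suc N) * signed_gf x k N"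
    by (simp add: signed_gf_def sum_distrib_left tail_prod_Suc mult.left_commute)
  finally show ?thesis .
qed

lemma signed_gf_Suc_multiplicity:
  "signed_gf x (Suc k) N = (1 - x ^ k) * signed_gf x k N + x ^ (k * Suc N)"
proof (induction N)
  case 0
  show ?case by (simp add: signed_gf_def)
next
  case (Suc N)
  have "signed_gf x (Suc k) (Suc N)
      = (1 - x ^ Suc N) * ((1 - x ^ k) * signed_gf x k N + x ^ (k * Suc N)) + x ^ (Suc k * Suc N)"
    by (simp add: signed_gf_Suc_truncation Suc.IH)
  also have "\<dots> = (1 - x ^ k) * ((1 - x ^ Suc N) * signed_gf x k N + x ^ (k * Suc N))
      + x ^ (k * Suc (Suc N))"
    by (simp add: algebra_simps power_add)
  also have "\<dots> = (1 - x ^ k) * signed_gf x k (Suc N) + x ^ (k * Suc (Suc N))"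
    by (simp add: signed_gf_Suc_truncation)
  finally show ?case .
qed

lemma signed_gf_1 [simp]: "signed_gf x 1 N = 1"
  using signed_gf_Suc_multiplicity [of x 0 N] by simp

lemma coeff_signed_gf_eq_0:
  assumes "k \<ge> 1" and "n \<le> N" and "k * (k - 1) < 2 * n"
  shows "coeff (signed_gf (monom 1 1) k N :: int poly) n = 0"
  using assms
proof (induction k arbitrary: n rule: nat_induct_at_least)
  case base
  then show ?case by (simp del: One_nat_def)
next
  case (Suc k)
  have "k * (k - 1) \<le> Suc k * (Suc k - 1)"
    by (intro mult_le_mono) auto
  then have "coeff (signed_gf (monom 1 1) k N :: int poly) n = 0"
    by (intro Suc.IH) (use Suc.prems in auto)
  moreover have "coeff ((monom 1 1) ^ k * signed_gf (monom 1 1) k N :: int poly) n = 0"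
  proof (cases "n < k")
    case False
    have "k * (k - 1) + 2 * k = Suc k * (Suc k - 1)"
      using \<open>k \<ge> 1\<close> by (cases k) auto
    with False have "coeff (signed_gf (monom 1 1) k N :: int poly) (n - k) = 0"
      by (intro Suc.IH) (use Suc.prems in linarith)+
    then show ?thesis by (simp add: monom_power coeff_monom_mult)
  qed (simp add: monom_power coeff_monom_mult)
  moreover have "n < k * Suc N"
    using Suc.prems \<open>k \<ge> 1\<close> by (metis le_imp_less_Suc less_le_trans mult_le_mono1 mult_1)
  ultimately show ?case
    by (simp add: signed_gf_Suc_multiplicity algebra_simps coeff_diff monom_power)
qed

lemma prod_one_minus_powers:
  fixes x :: "'a::comm_ring_1"
  assumes "finite A"
  shows "(\<Prod>j\<in>A. 1 - x ^ j) = (\<Sum>T\<in>Pow A. (-1) ^ card T * x ^ \<Sum>T)"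
  using prod_diff_conv_sum [OF assms, of "\<lambda>_. 1" "\<lambda>j. x ^ j"] by (simp add: power_sum)

lemma signed_gf_eq_sum:
  "signed_gf x k N = (\<Sum>(m, T)\<in>Sigma {..N} (\<lambda>m. Pow {m<..N}). (-1) ^ card T * x ^ (k * m + \<Sum>T))"
  by (simp add: signed_gf_def tail_prod_def prod_one_minus_powers sum_distrib_left
      sum.Sigma power_add mult.left_commute)

definition D_pairs :: "nat \<Rightarrow> nat \<Rightarrow> nat \<Rightarrow> (nat \<times> nat set) set" where
  "D_pairs k N n = {(m, T). m \<le> N \<and> T \<subseteq> {m<..N} \<and> k * m + \<Sum>T = n}"

lemma D_pairsD:
  assumes "(m, T) \<in> D_pairs k N n"
  shows "finite T" and "\<forall>t\<in>T. m < t" and "k * m + \<Sum>T = n"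
  using assms finite_subset [of T "{m<..N}"] by (auto simp: D_pairs_def)

lemma finite_D_pairs: "finite (D_pairs k N n)"
  by (rule finite_subset [of _ "Sigma {..N} (\<lambda>m. Pow {m<..N})"]) (auto simp: D_pairs_def)

lemma coeff_signed_gf:
  "coeff (signed_gf (monom 1 1) k N :: int poly) n = (\<Sum>(m, T)\<in>D_pairs k N n. (-1) ^ card T)"
proof -
  have coeff_term: "coeff ((-1) ^ c * monom 1 e :: int poly) n = (if e = n then (-1) ^ c else 0)"
    for c e by (cases "even c") auto
  show ?thesis
    by (simp add: signed_gf_eq_sum coeff_sum monom_power coeff_term split_beta D_pairs_def
        sum.inter_filter [symmetric])
      (intro sum.cong; auto)
qed

definition D_partition :: "nat \<Rightarrow> nat \<times> nat set \<Rightarrow> nat multiset" where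
  "D_partition k = (\<lambda>(m, T). replicate_mset k m + mset_set T)"

lemma count_D_partition:
  assumes "finite T" and "m \<notin> T"
  shows "count (D_partition k (m, T)) x = (if x = m then k else if x \<in> T then 1 else 0)"
  using assms by (auto simp: D_partition_def)

lemma sum_mset_D_partition:
  assumes "finite T"
  shows "sum_mset (D_partition k (m, T)) = k * m + \<Sum>T"
  using assms by (simp add: D_partition_def sum_unfold_sum_mset)

context
  fixes k m :: nat and T :: "nat set"
  assumes k: "k \<ge> 1" and T: "finite T" "\<forall>t\<in>T. m < t"
begin

lemma set_mset_D_partition: "set_mset (D_partition k (m, T)) = insert m T"
  using k T by (auto simp: D_partition_def)

lemma Min_mset_D_partition: "Min_mset (D_partition k (m, T)) = m"
  unfolding set_mset_D_partition using T by (intro Min_eqI) (auto simp: less_imp_le)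

lemma big_parts_D_partition: "big_parts (D_partition k (m, T)) = card T"
proof -
  have "filter_mset (\<lambda>x. m < x) (replicate_mset k m) = {#}"
    by (induction k) auto
  moreover have "{x \<in> T. m < x} = T"
    using T by auto
  ultimately have "filter_mset (\<lambda>x. m < x) (D_partition k (m, T)) = mset_set T"
    using T by (simp add: D_partition_def)
  then show ?thesis
    by (simp add: big_parts_def Min_mset_D_partition)
qed

end

lemma D_partition_in_D_set:
  assumes "k \<ge> 1" and "(m, T) \<in> D_pairs k N n"
  shows "D_partition k (m, T) \<in> D_set k n"
proof -
  note T = D_pairsD(1,2) [OF assms(2)] and sum = D_pairsD(3) [OF assms(2)]
  moreover have "m \<notin> T"
    using T by auto
  moreover have "D_partition k (m, T) \<noteq> {#}"
    using set_mset_D_partition [OF assms(1) T] by force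
  ultimately show ?thesis
    unfolding D_set_def mem_Collect_eq Min_mset_D_partition [OF assms(1) T]
    by (auto simp: count_D_partition sum_mset_D_partition set_mset_D_partition [OF assms(1) T])
qed

definition D_pair_of :: "nat multiset \<Rightarrow> nat \<times> nat set" where
  "D_pair_of M = (Min_mset M, set_mset M - {Min_mset M})"

lemma D_pair_of_D_partition:
  assumes "k \<ge> 1" and "(m, T) \<in> D_pairs k N n"
  shows "D_pair_of (D_partition k (m, T)) = (m, T)"
  using D_pairsD(1,2) [OF assms(2)] Min_mset_D_partition [OF assms(1)] set_mset_D_partition [OF assms(1)]
  by (auto simp: D_pair_of_def)

lemma D_partition_D_pair_of:
  assumes "M \<in> D_set k n"
  shows "D_partition k (D_pair_of M) = M"
proof (rule multiset_eqI)
  fix x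
  from assms have "count M (Min_mset M) = k" "\<forall>x \<in># M. x \<noteq> Min_mset M \<longrightarrow> count M x = 1"
    by (auto simp: D_set_def)
  then show "count (D_partition k (D_pair_of M)) x = count M x"
    by (auto simp: D_pair_of_def count_D_partition not_in_iff)
qed

lemma D_pair_of_in_D_pairs:
  assumes "M \<in> D_set k n"
  shows "D_pair_of M \<in> D_pairs k n n"
proof -
  from assms have "M \<noteq> {#}" and sum: "sum_mset M = n"
    by (auto simp: D_set_def)
  then have min_less: "\<forall>t \<in> set_mset M - {Min_mset M}. Min_mset M < t"
    by (auto simp: order.not_eq_order_implies_strict)
  have le_n: "x \<le> n" if "x \<in># M" for x
    using that sum by (metis sum_mset.remove le_add1)
  have "k * Min_mset M + \<Sum>(set_mset M - {Min_mset M}) = n"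
    using sum_mset_D_partition [of "set_mset M - {Min_mset M}" k "Min_mset M"]
      D_partition_D_pair_of [OF assms] sum
    by (simp add: D_pair_of_def)
  with le_n min_less \<open>M \<noteq> {#}\<close> show ?thesis
    by (auto simp: D_pair_of_def D_pairs_def)
qed

lemma bij_betw_D_partition:
  assumes "k \<ge> 1"
  shows "bij_betw (D_partition k) (D_pairs k n n) (D_set k n)"
  by (rule bij_betw_byWitness [where f' = D_pair_of])
    (use assms D_pair_of_D_partition D_partition_D_pair_of D_partition_in_D_set D_pair_of_in_D_pairs
      in fastforce)+

lemma sum_D_set_sign_eq_coeff:
  assumes "k \<ge> 1"
  shows "(\<Sum>M\<in>D_set k n. (-1::int) ^ big_parts M) = coeff (signed_gf (monom 1 1) k n) n"
proof -
  have "(\<Sum>M\<in>D_set k n. (-1::int) ^ big_parts M)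
      = (\<Sum>p\<in>D_pairs k n n. (-1) ^ big_parts (D_partition k p))"
    by (rule sum.reindex_bij_betw [OF bij_betw_D_partition [OF assms], symmetric])
  also have "\<dots> = (\<Sum>(m, T)\<in>D_pairs k n n. (-1) ^ card T)"
    using big_parts_D_partition [OF assms] D_pairsD by (intro sum.cong) auto
  also have "\<dots> = coeff (signed_gf (monom 1 1) k n) n"
    by (rule coeff_signed_gf [symmetric])
  finally show ?thesis .
qed

lemma sum_minus_one_power_eq_card_diff:
  assumes "finite A"
  shows "(\<Sum>a\<in>A. (-1::int) ^ f a) = int (card {a\<in>A. even (f a)}) - int (card {a\<in>A. odd (f a)})"
proof -
  have "(\<Sum>a\<in>A. (-1::int) ^ f a) = (\<Sum>a\<in>A. if even (f a) then 1 else 0) - (\<Sum>a\<in>A. if odd (f a) then 1 else 0)"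
    by (subst sum_subtractf [symmetric]) (rule sum.cong; simp)
  with assms show ?thesis
    by (simp flip: sum.inter_filter)
qed

lemma card_eq_card_even_plus_card_odd:
  assumes "finite A"
  shows "card A = card {a\<in>A. even (f a)} + card {a\<in>A. odd (f a)}"
proof -
  have "A = {a\<in>A. even (f a)} \<union> {a\<in>A. odd (f a)}"
    by auto
  then show ?thesis
    using assms by (metis (no_types, lifting) card_Un_disjoint disjoint_iff finite_Un mem_Collect_eq)
qed

theorem corollary9:
  fixes k n :: nat
  assumes "k \<ge> 1" and "2 * n > k * (k - 1)"
  shows "De k n = Do k n \<and> even (D k n)"
proof -
  have fin: "finite (D_set k n)"
    using bij_betw_finite [OF bij_betw_D_partition [OF assms(1)]] finite_D_pairs by blast
  have "(\<Sum>M\<in>D_set k n. (-1::int) ^ big_parts M) = 0"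
    using sum_D_set_sign_eq_coeff [OF assms(1)]
      coeff_signed_gf_eq_0 [OF assms(1) order.refl assms(2)] by simp
  then have De_eq_Do: "De k n = Do k n"
    by (simp add: De_def Do_def sum_minus_one_power_eq_card_diff [OF fin])
  have "D k n = De k n + Do k n"
    by (simp add: D_def De_def Do_def card_eq_card_even_plus_card_odd [OF fin])
  with De_eq_Do show ?thesis
    by simp
qed

end
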